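(* Let $G$ be a stacked $4$-polytopal graph. If $G$ has an induced subgraph isomorphic to $G_3\star G_6$ for some graph $G_3$ on $3$ vertices and some graph $G_6$ on $6$ vertices, then $G$ has an induced subgraph isomorphic to $K_3\star P_6$.
   Context: A stacked $4$-polytopal graph is the $1$-skeleton of a stacked $4$-polytope, i.e. of a simplicial $4$-polytope obtained from a $4$-simplex by repeatedly gluing a new $4$-simplex onto a facet. $K_3$ is the triangle, $P_6$ the path on $6$ vertices, $\star$ the graph join. *)

theory Defs
  imports Main
begin

definition simple_graph :: "'a set \<Rightarrow> ('a \<Rightarrow> 'a \<Rightarrow> bool) \<Rightarrow> bool" where
  "simple_graph V E \<longleftrightarrow> finite V \<and> (\<forall>x y. E x y \<longrightarrow> E y x) \<and> (\<forall>x. \<not> E x x)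
     \<and> (\<forall>x y. E x y \<longrightarrow> x \<in> V \<and> y \<in> V)"

text \<open>Stacked 4-polytopes, tracked combinatorially by (vertices, graph, facets):
start with the 4-simplex (5 vertices, all 4-subsets as facets); stacking a new
4-simplex on facet F adds a new vertex v adjacent to the 4 vertices of F, removes
the facet F and adds the 4 facets (F - {u}) + {v}.\<close>

inductive stacked4 :: "'a set \<Rightarrow> ('a \<Rightarrow> 'a \<Rightarrow> bool) \<Rightarrow> 'a set set \<Rightarrow> bool" where
  simplex: "finite S \<Longrightarrow> card S = 5 \<Longrightarrow>
     stacked4 S (\<lambda>x y. x \<in> S \<and> y \<in> S \<and> x \<noteq> y) {F. F \<subseteq> S \<and> card F = 4}"
| stack: "stacked4 V E Fs \<Longrightarrow> F \<in> Fs \<Longrightarrow> v \<notin> V \<Longrightarrow>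
     stacked4 (insert v V) (\<lambda>x y. E x y \<or> (x = v \<and> y \<in> F) \<or> (y = v \<and> x \<in> F))
       ((Fs - {F}) \<union> {insert v (F - {u}) | u. u \<in> F})"

definition stacked4_graph :: "'a set \<Rightarrow> ('a \<Rightarrow> 'a \<Rightarrow> bool) \<Rightarrow> bool" where
  "stacked4_graph V E \<longleftrightarrow> (\<exists>Fs. stacked4 V E Fs)"

definition has_induced :: "'a set \<Rightarrow> ('a \<Rightarrow> 'a \<Rightarrow> bool) \<Rightarrow> 'b set \<Rightarrow> ('b \<Rightarrow> 'b \<Rightarrow> bool) \<Rightarrow> bool" where
  "has_induced V E W H \<longleftrightarrow> (\<exists>f. inj_on f W \<and> f ` W \<subseteq> V \<and>
      (\<forall>x\<in>W. \<forall>y\<in>W. H x y \<longleftrightarrow> E (f x) (f y)))"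

definition join_V :: "'a set \<Rightarrow> 'b set \<Rightarrow> ('a + 'b) set" where
  "join_V V1 V2 = Inl ` V1 \<union> Inr ` V2"

fun join_E :: "'a set \<Rightarrow> ('a \<Rightarrow> 'a \<Rightarrow> bool) \<Rightarrow> 'b set \<Rightarrow> ('b \<Rightarrow> 'b \<Rightarrow> bool)
    \<Rightarrow> 'a + 'b \<Rightarrow> 'a + 'b \<Rightarrow> bool" where
  "join_E V1 E1 V2 E2 (Inl x) (Inl y) = E1 x y"
| "join_E V1 E1 V2 E2 (Inr x) (Inr y) = E2 x y"
| "join_E V1 E1 V2 E2 (Inl x) (Inr y) = (x \<in> V1 \<and> y \<in> V2)"
| "join_E V1 E1 V2 E2 (Inr x) (Inl y) = (x \<in> V2 \<and> y \<in> V1)"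

definition K3_V :: "nat set" where "K3_V = {0, 1, 2}"
definition K3_E :: "nat \<Rightarrow> nat \<Rightarrow> bool" where
  "K3_E x y \<longleftrightarrow> x \<in> K3_V \<and> y \<in> K3_V \<and> x \<noteq> y"

definition P6_V :: "nat set" where "P6_V = {0..<6}"
definition P6_E :: "nat \<Rightarrow> nat \<Rightarrow> bool" where
  "P6_E x y \<longleftrightarrow> x \<in> P6_V \<and> y \<in> P6_V \<and> (y = x + 1 \<or> x = y + 1)"

end

theory Submission
  imports Defs
begin

text \<open>
  Every stacked 4-polytope (V, E, Fs) satisfies an invariant, proved by
  induction along the stacking construction:
  \<^item> its graph has no induced 4-cycle;
  \<^item> the common neighbourhood (link) of every triangle T is an induced path, and
    the facets containing T are exactly T plus one of the two end vertices of
    this path.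
  The link of the simplex's triangles is an edge; a stacking step onto a facet F
  prepends the new vertex to the link of each triangle of F (at the end marking F),
  gives triangles through the new vertex an edge as link, and changes nothing else.

  For the theorem, an induced copy of G3 \<star> G6 gives completely joined vertex
  sets A, B with |A| = 3 and |B| = 6. If A had a non-edge, then either B has a
  non-edge too (an induced 4-cycle) or B is a 6-clique, which is impossible since
  three of its vertices would span a triangle inside the link of the other three.
  Hence A is a triangle whose link path contains B, so it has at least six
  vertices, and A together with six consecutive link vertices is an induced
  K3 \<star> P6.
\<close>

definition clique :: "('a \<Rightarrow> 'a \<Rightarrow> bool) \<Rightarrow> 'a set \<Rightarrow> bool" where
  "clique E S \<longleftrightarrow> (\<forall>x\<in>S. \<forall>y\<in>S. x \<noteq> y \<longrightarrow> E x y)"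

definition common_nbrs :: "('a \<Rightarrow> 'a \<Rightarrow> bool) \<Rightarrow> 'a set \<Rightarrow> 'a set" where
  "common_nbrs E T = {x. \<forall>t\<in>T. E x t}"

definition induced_path :: "('a \<Rightarrow> 'a \<Rightarrow> bool) \<Rightarrow> 'a list \<Rightarrow> bool" where
  "induced_path E xs \<longleftrightarrow> distinct xs \<and>
     (\<forall>i<length xs. \<forall>j<length xs. E (xs ! i) (xs ! j) \<longleftrightarrow> j = Suc i \<or> i = Suc j)"

definition no_induced_C4 :: "('a \<Rightarrow> 'a \<Rightarrow> bool) \<Rightarrow> bool" where
  "no_induced_C4 E \<longleftrightarrow>
     (\<forall>a b c d. E a c \<and> E c b \<and> E b d \<and> E d a \<and> a \<noteq> b \<and> c \<noteq> d \<longrightarrow> E a b \<or> E c d)"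

definition link_path :: "('a \<Rightarrow> 'a \<Rightarrow> bool) \<Rightarrow> 'a set set \<Rightarrow> 'a set \<Rightarrow> 'a list \<Rightarrow> bool" where
  "link_path E Fs T xs \<longleftrightarrow> induced_path E xs \<and> 2 \<le> length xs \<and> set xs = common_nbrs E T \<and>
     (\<forall>F\<in>Fs. T \<subseteq> F \<longrightarrow> F = insert (hd xs) T \<or> F = insert (last xs) T)"

definition triangle_links :: "'a set \<Rightarrow> ('a \<Rightarrow> 'a \<Rightarrow> bool) \<Rightarrow> 'a set set \<Rightarrow> bool" where
  "triangle_links V E Fs \<longleftrightarrow>
     (\<forall>T. T \<subseteq> V \<and> card T = 3 \<and> clique E T \<longrightarrow> (\<exists>xs. link_path E Fs T xs))"

definition stacked_inv :: "'a set \<Rightarrow> ('a \<Rightarrow> 'a \<Rightarrow> bool) \<Rightarrow> 'a set set \<Rightarrow> bool" where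
  "stacked_inv V E Fs \<longleftrightarrow> simple_graph V E \<and> (\<forall>F\<in>Fs. F \<subseteq> V \<and> card F = 4 \<and> clique E F) \<and>
     no_induced_C4 E \<and> triangle_links V E Fs"

lemma no_induced_C4D:
  assumes "no_induced_C4 E" "E a c" "E c b" "E b d" "E d a" "a \<noteq> b" "c \<noteq> d"
  shows "E a b \<or> E c d"
  using assms unfolding no_induced_C4_def by blast

lemma induced_path_rev:
  assumes "induced_path E xs"
  shows "induced_path E (rev xs)"
  unfolding induced_path_def
proof (intro conjI allI impI)
  show "distinct (rev xs)" using assms by (simp add: induced_path_def)
  fix i j assume i: "i < length (rev xs)" and j: "j < length (rev xs)"
  have "E (rev xs ! i) (rev xs ! j) = E (xs ! (length xs - Suc i)) (xs ! (length xs - Suc j))"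
    using i j by (simp add: rev_nth)
  also have "\<dots> \<longleftrightarrow> length xs - Suc j = Suc (length xs - Suc i) \<or> length xs - Suc i = Suc (length xs - Suc j)"
    using assms i j unfolding induced_path_def by simp
  also have "\<dots> \<longleftrightarrow> j = Suc i \<or> i = Suc j" using i j by auto
  finally show "E (rev xs ! i) (rev xs ! j) \<longleftrightarrow> j = Suc i \<or> i = Suc j" .
qed

lemma induced_path_cong:
  assumes "induced_path E xs" "\<And>x y. x \<in> set xs \<Longrightarrow> y \<in> set xs \<Longrightarrow> E' x y \<longleftrightarrow> E x y"
  shows "induced_path E' xs"
  using assms unfolding induced_path_def by (metis nth_mem)

lemma induced_path_Cons:
  assumes path: "induced_path E xs" and "xs \<noteq> []" "v \<notin> set xs" "\<not> E v v"
    and sym: "\<And>x y. E x y \<Longrightarrow> E y x"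
    and v_nbr: "\<And>x. x \<in> set xs \<Longrightarrow> E v x \<longleftrightarrow> x = hd xs"
  shows "induced_path E (v # xs)"
  unfolding induced_path_def
proof (intro conjI allI impI)
  show "distinct (v # xs)" using assms by (simp add: induced_path_def)
  have edge_v: "E v (xs ! k) \<longleftrightarrow> k = 0" if "k < length xs" for k
    using v_nbr[of "xs ! k"] that path \<open>xs \<noteq> []\<close>
    by (auto simp: hd_conv_nth nth_eq_iff_index_eq induced_path_def)
  fix i j assume i: "i < length (v # xs)" and j: "j < length (v # xs)"
  show "E ((v # xs) ! i) ((v # xs) ! j) \<longleftrightarrow> j = Suc i \<or> i = Suc j"
  proof (cases i; cases j)
    fix j' assume "i = 0" "j = Suc j'"
    then show ?thesis using edge_v[of j'] j by simp
  next
    fix i' assume "i = Suc i'" "j = 0"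
    then show ?thesis using edge_v[of i'] i sym by auto
  next
    fix i' j' assume "i = Suc i'" "j = Suc j'"
    then show ?thesis using path i j unfolding induced_path_def by simp
  qed (use \<open>\<not> E v v\<close> in simp)
qed

lemma induced_path_no_triangle:
  assumes "induced_path E xs" "x \<in> set xs" "y \<in> set xs" "z \<in> set xs" "E x y" "E y z" "E x z"
  shows False
proof -
  obtain i j k where "i < length xs" "j < length xs" "k < length xs"
    "x = xs ! i" "y = xs ! j" "z = xs ! k" using assms by (metis in_set_conv_nth)
  then show False using assms unfolding induced_path_def by auto
qed

lemma link_path_rev:
  assumes "link_path E Fs T xs"
  shows "link_path E Fs T (rev xs)"
  using assms induced_path_rev unfolding link_path_def
  by (auto simp: hd_rev last_rev)

lemma card_Suc_over_subset:
  assumes "finite S" "T \<subseteq> S" "card S = Suc (card T)"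
  obtains w where "w \<notin> T" "S = insert w T"
proof -
  have "card (S - T) = 1" using assms card_Diff_subset[of T S] finite_subset by fastforce
  then obtain w where "S - T = {w}" by (rule card_1_singletonE)
  then show thesis using that assms(2) by blast
qed

lemma card_two_over_subset:
  assumes "finite S" "T \<subseteq> S" "card S = card T + 2"
  obtains c d where "c \<noteq> d" "S - T = {c, d}"
proof -
  have "card (S - T) = 2" using assms card_Diff_subset[of T S] finite_subset by fastforce
  then show thesis using that by (auto simp: card_2_iff)
qed

lemma link_path_starting_at:
  assumes path: "link_path E Fs T xs" and irrefl: "\<And>x. \<not> E x x"
    and "insert w T \<in> Fs" "w \<notin> T"
  obtains ys where "link_path E Fs T ys" "hd ys = w"
proof -
  have ne: "xs \<noteq> []" using path unfolding link_path_def by auto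
  have "hd xs \<in> common_nbrs E T" "last xs \<in> common_nbrs E T"
    using path ne unfolding link_path_def by auto
  then have "hd xs \<notin> T" "last xs \<notin> T" using irrefl unfolding common_nbrs_def by auto
  moreover have "insert w T = insert (hd xs) T \<or> insert w T = insert (last xs) T"
    using path assms(3) unfolding link_path_def by blast
  ultimately have "w = hd xs \<or> w = last xs" using \<open>w \<notin> T\<close> by blast
  then show thesis
    using that[of xs] that[of "rev xs"] path link_path_rev[OF path] ne by (auto simp: hd_rev)
qed

text \<open>The 4-simplex satisfies the invariant: the link of a triangle is the edge
  formed by the two remaining vertices.\<close>
lemma stacked_inv_simplex:
  assumes "finite S" "card S = 5"
  shows "stacked_inv S (\<lambda>x y. x \<in> S \<and> y \<in> S \<and> x \<noteq> y) {F. F \<subseteq> S \<and> card F = 4}"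
proof -
  let ?K = "\<lambda>x y. x \<in> S \<and> y \<in> S \<and> x \<noteq> y"
  have "\<exists>xs. link_path ?K {F. F \<subseteq> S \<and> card F = 4} T xs"
    if T: "T \<subseteq> S" "card T = 3" for T
  proof -
    obtain c d where cd: "c \<noteq> d" "S - T = {c, d}"
      using card_two_over_subset[OF assms(1) T(1)] T(2) assms(2) by auto
    have "T \<noteq> {}" using T(2) by auto
    then have "common_nbrs ?K T = S - T"
      using T(1) unfolding common_nbrs_def by blast
    moreover have "F = insert c T \<or> F = insert d T"
      if F: "F \<subseteq> S" "card F = 4" "T \<subseteq> F" for F
    proof -
      obtain w where w: "w \<notin> T" "F = insert w T"
        using card_Suc_over_subset[of F T] F T(2) finite_subset[OF F(1) assms(1)] by auto
      then have "w \<in> S - T" using F(1) by blast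
      then show ?thesis using w(2) cd(2) by auto
    qed
    moreover have "induced_path ?K [c, d]"
      using cd unfolding induced_path_def by (auto simp: less_Suc_eq nth_Cons')
    ultimately show ?thesis using cd unfolding link_path_def by (intro exI[of _ "[c, d]"]) auto
  qed
  then have "triangle_links S ?K {F. F \<subseteq> S \<and> card F = 4}"
    unfolding triangle_links_def by blast
  moreover have "simple_graph S ?K" "no_induced_C4 ?K"
    using assms(1) unfolding simple_graph_def no_induced_C4_def by auto
  ultimately show ?thesis unfolding stacked_inv_def clique_def by blast
qed

locale stacking_step =
  fixes V :: "'a set" and E :: "'a \<Rightarrow> 'a \<Rightarrow> bool" and Fs :: "'a set set"
    and F :: "'a set" and v :: 'a
  assumes inv: "stacked_inv V E Fs" and F_facet: "F \<in> Fs" and v_fresh: "v \<notin> V"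
begin

definition E_new :: "'a \<Rightarrow> 'a \<Rightarrow> bool" where
  "E_new x y \<longleftrightarrow> E x y \<or> (x = v \<and> y \<in> F) \<or> (y = v \<and> x \<in> F)"

definition Fs_new :: "'a set set" where
  "Fs_new = (Fs - {F}) \<union> {insert v (F - {u}) | u. u \<in> F}"

lemma graph_old: "finite V" "\<And>x y. E x y \<Longrightarrow> E y x" "\<And>x. \<not> E x x"
  "\<And>x y. E x y \<Longrightarrow> x \<in> V \<and> y \<in> V"
  using inv unfolding stacked_inv_def simple_graph_def by auto

lemma facet: "G \<in> Fs \<Longrightarrow> G \<subseteq> V \<and> card G = 4 \<and> clique E G"
  using inv unfolding stacked_inv_def by blast

lemma F_props: "F \<subseteq> V" "card F = 4" "clique E F" "finite F" "v \<notin> F"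
proof -
  show "F \<subseteq> V" "card F = 4" "clique E F" using facet[OF F_facet] by auto
  then show "finite F" using graph_old(1) finite_subset by blast
  show "v \<notin> F" using \<open>F \<subseteq> V\<close> v_fresh by blast
qed

lemma E_new_old: "x \<noteq> v \<Longrightarrow> y \<noteq> v \<Longrightarrow> E_new x y \<longleftrightarrow> E x y"
  unfolding E_new_def by auto

lemma E_new_apex: "E_new v x \<longleftrightarrow> x \<in> F" "E_new x v \<longleftrightarrow> x \<in> F"
  using graph_old(4) v_fresh F_props(5) unfolding E_new_def by auto

lemma E_new_mono: "E x y \<Longrightarrow> E_new x y"
  unfolding E_new_def by simp

lemma E_new_facet: "x \<in> F \<Longrightarrow> y \<in> F \<Longrightarrow> x \<noteq> y \<Longrightarrow> E_new x y"
  using F_props(3) E_new_mono unfolding clique_def by blast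

lemma simple_graph_new: "simple_graph (insert v V) E_new"
  using graph_old F_props(1,5) unfolding simple_graph_def E_new_def by auto

lemma facets_new: "G \<in> Fs_new \<Longrightarrow> G \<subseteq> insert v V \<and> card G = 4 \<and> clique E_new G"
proof -
  assume "G \<in> Fs_new"
  then consider "G \<in> Fs" | u where "u \<in> F" "G = insert v (F - {u})"
    unfolding Fs_new_def by blast
  then show ?thesis
  proof cases
    case 1 then show ?thesis using facet E_new_mono unfolding clique_def by blast
  next
    case (2 u)
    then have "card G = 4" using F_props by simp
    moreover have "clique E_new G" using 2 E_new_facet E_new_apex unfolding clique_def by auto
    ultimately show ?thesis using 2 F_props(1) by blast
  qed
qed

text \<open>An induced 4-cycle through the new vertex would have both of its
  neighbours in the clique F, hence a chord.\<close>
lemma no_induced_C4_new: "no_induced_C4 E_new"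
  unfolding no_induced_C4_def
proof (intro allI impI)
  fix a b c d assume H: "E_new a c \<and> E_new c b \<and> E_new b d \<and> E_new d a \<and> a \<noteq> b \<and> c \<noteq> d"
  show "E_new a b \<or> E_new c d"
  proof (cases "v \<in> {a, b, c, d}")
    case True
    then consider "v = a" | "v = b" | "v = c" | "v = d" by blast
    then show ?thesis
    proof cases
      case 1 then have "c \<in> F" "d \<in> F" using H E_new_apex by auto
      then show ?thesis using H E_new_facet by blast
    next
      case 2 then have "c \<in> F" "d \<in> F" using H E_new_apex by auto
      then show ?thesis using H E_new_facet by blast
    next
      case 3 then have "a \<in> F" "b \<in> F" using H E_new_apex by auto
      then show ?thesis using H E_new_facet by blast
    next
      case 4 then have "a \<in> F" "b \<in> F" using H E_new_apex by auto
      then show ?thesis using H E_new_facet by blast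
    qed
  next
    case False
    then have "E a c \<and> E c b \<and> E b d \<and> E d a" using H E_new_old by auto
    then have "E a b \<or> E c d"
      using inv H unfolding stacked_inv_def no_induced_C4_def by blast
    then show ?thesis using E_new_mono by blast
  qed
qed

lemma common_nbrs_new:
  assumes "v \<notin> T" "T \<noteq> {}"
  shows "common_nbrs E_new T = (if T \<subseteq> F then insert v (common_nbrs E T) else common_nbrs E T)"
proof -
  have old: "x \<in> common_nbrs E_new T \<longleftrightarrow> x \<in> common_nbrs E T" if xv: "x \<noteq> v" for x
  proof -
    have "E_new x t \<longleftrightarrow> E x t" if "t \<in> T" for t using that xv assms(1) E_new_old by metis
    then show ?thesis unfolding common_nbrs_def by simp
  qed
  have apex: "v \<in> common_nbrs E_new T \<longleftrightarrow> T \<subseteq> F"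
    using E_new_apex unfolding common_nbrs_def by auto
  have "v \<notin> common_nbrs E T"
    using assms(2) graph_old(4) v_fresh unfolding common_nbrs_def by auto
  then have "x \<in> common_nbrs E_new T \<longleftrightarrow>
      x \<in> (if T \<subseteq> F then insert v (common_nbrs E T) else common_nbrs E T)" for x
    using old apex by (cases "x = v") auto
  then show ?thesis by blast
qed

lemma old_triangle_link:
  assumes T: "T \<subseteq> insert v V" "card T = 3" "clique E_new T" "v \<notin> T"
  obtains xs where "link_path E Fs T xs" "induced_path E_new xs" "v \<notin> set xs"
proof -
  have "E_new x y \<longleftrightarrow> E x y" if "x \<in> T" "y \<in> T" for x y
    using that T(4) E_new_old by metis
  then have "clique E T" using T(3) unfolding clique_def by simp
  then obtain xs where xs: "link_path E Fs T xs"
    using inv T unfolding stacked_inv_def triangle_links_def by blast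
  have "T \<noteq> {}" using T(2) by auto
  then have "set xs \<subseteq> V" using xs graph_old(4) unfolding link_path_def common_nbrs_def by blast
  then have "v \<notin> set xs" using v_fresh by blast
  moreover have "induced_path E_new xs"
    using xs \<open>v \<notin> set xs\<close> E_new_old induced_path_cong[of E xs E_new]
    unfolding link_path_def by metis
  ultimately show thesis using that xs by blast
qed

text \<open>A triangle that is not a face of F: neither its link nor its facets change.\<close>
lemma link_new_off_facet:
  assumes T: "T \<subseteq> insert v V" "card T = 3" "clique E_new T" "v \<notin> T" and "\<not> T \<subseteq> F"
  shows "\<exists>xs. link_path E_new Fs_new T xs"
proof -
  obtain xs where xs: "link_path E Fs T xs" "induced_path E_new xs"
    using old_triangle_link[OF T] .
  have "T \<noteq> {}" using T(2) by auto
  then have "common_nbrs E_new T = common_nbrs E T"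
    using common_nbrs_new[OF T(4)] \<open>\<not> T \<subseteq> F\<close> by simp
  moreover have "G \<in> Fs" if "G \<in> Fs_new" "T \<subseteq> G" for G
    using that T(4) \<open>\<not> T \<subseteq> F\<close> unfolding Fs_new_def by blast
  ultimately have "link_path E_new Fs_new T xs" using xs unfolding link_path_def by simp
  then show ?thesis by blast
qed

text \<open>A triangle of F: the new vertex is prepended to its link path, at the end
  marking the destroyed facet F, and the new facet insert v T takes its place.\<close>
lemma link_new_in_facet:
  assumes T: "T \<subseteq> F" "card T = 3"
  shows "\<exists>xs. link_path E_new Fs_new T xs"
proof -
  have vT: "v \<notin> T" using T(1) F_props(5) by blast
  have clique: "clique E_new T" using T(1) E_new_facet unfolding clique_def by blast
  obtain w where w: "w \<notin> T" "F = insert w T"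
    using card_Suc_over_subset[OF F_props(4) T(1)] T(2) F_props(2) by auto
  obtain xs where xs: "link_path E Fs T xs" "induced_path E_new xs" "v \<notin> set xs"
    using old_triangle_link T F_props(1) vT clique by blast
  obtain ys where ys: "link_path E Fs T ys" "hd ys = w"
    using link_path_starting_at[OF xs(1) graph_old(3)] F_facet w by metis
  have ne: "ys \<noteq> []" and set_ys: "set ys = common_nbrs E T"
    using ys(1) unfolding link_path_def by auto
  have "T \<noteq> {}" using T(2) by auto
  then have nbrs: "common_nbrs E_new T = insert v (set ys)"
    using common_nbrs_new[OF vT] T(1) set_ys by simp
  have ys_T: "x \<notin> T" if "x \<in> set ys" for x
    using that set_ys graph_old(3) unfolding common_nbrs_def by blast
  have v_ys: "v \<notin> set ys" using xs(1,3) ys(1) unfolding link_path_def by simp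
  have path: "induced_path E_new (v # ys)"
  proof (rule induced_path_Cons[OF _ ne v_ys])
    show "induced_path E_new ys"
      using ys(1) v_ys E_new_old induced_path_cong[of E ys E_new] unfolding link_path_def by metis
    show "\<not> E_new v v" "\<And>x y. E_new x y \<Longrightarrow> E_new y x"
      using simple_graph_new unfolding simple_graph_def by auto
    show "E_new v x \<longleftrightarrow> x = hd ys" if "x \<in> set ys" for x
      using that ys_T[OF that] E_new_apex(1) w(2) ys(2) by auto
  qed
  have facets: "G = insert (hd (v # ys)) T \<or> G = insert (last (v # ys)) T"
    if G: "G \<in> Fs_new" "T \<subseteq> G" for G
  proof -
    consider "G \<in> Fs" "G \<noteq> F" | u where "u \<in> F" "G = insert v (F - {u})"
      using G(1) unfolding Fs_new_def by blast
    then show ?thesis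
    proof cases
      case 1
      then have "G = insert (last ys) T"
        using ys G(2) w(2) unfolding link_path_def by auto
      then show ?thesis using ne by simp
    next
      case (2 u)
      then have "u = w" using G(2) vT w by blast
      then show ?thesis using 2 w by auto
    qed
  qed
  have "link_path E_new Fs_new T (v # ys)"
    using path facets nbrs ys(1) unfolding link_path_def by auto
  then show ?thesis by blast
qed

text \<open>A triangle through the new vertex: its link consists of the two vertices of F
  outside it, adjacent to each other.\<close>
lemma link_new_apex:
  assumes T: "card T = 3" "clique E_new T" "v \<in> T"
  shows "\<exists>xs. link_path E_new Fs_new T xs"
proof -
  define T' where "T' = T - {v}"
  have fin: "finite T" using T(1) card.infinite by fastforce
  have TT: "T = insert v T'" using T(3) unfolding T'_def by auto
  have card: "card T' = 2" unfolding T'_def using T(1,3) fin by simp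
  have T'F: "T' \<subseteq> F"
  proof
    fix t assume "t \<in> T'"
    then have "t \<in> T" "t \<noteq> v" unfolding T'_def by auto
    then have "E_new v t" using T(2,3) unfolding clique_def by auto
    then show "t \<in> F" using E_new_apex(1) by simp
  qed
  obtain c d where cd: "c \<noteq> d" "F - T' = {c, d}"
    using card_two_over_subset[OF F_props(4) T'F] card F_props(2) by auto
  have cdF: "c \<in> F" "d \<in> F" "c \<notin> T'" "d \<notin> T'" using cd(2) by blast+
  have nbr_iff: "x \<in> common_nbrs E_new T \<longleftrightarrow> E_new x v \<and> (\<forall>t\<in>T'. E_new x t)" for x
    unfolding common_nbrs_def TT(1) by simp
  have nbrs: "common_nbrs E_new T = {c, d}"
  proof (intro set_eqI iffI)
    fix x assume x: "x \<in> common_nbrs E_new T"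
    then have "x \<in> F" using nbr_iff E_new_apex(2) by simp
    moreover have "x \<notin> T'" using x nbr_iff simple_graph_new unfolding simple_graph_def by auto
    ultimately show "x \<in> {c, d}" using cd(2) by blast
  next
    fix x assume "x \<in> {c, d}"
    then have "x \<in> F" "x \<notin> T'" using cdF by auto
    then show "x \<in> common_nbrs E_new T"
      using nbr_iff E_new_apex(2) E_new_facet T'F by (metis subsetD)
  qed
  have "E_new c d" "E_new d c" using cdF cd(1) E_new_facet by auto
  moreover have "\<not> E_new c c" "\<not> E_new d d"
    using simple_graph_new unfolding simple_graph_def by auto
  ultimately have path: "induced_path E_new [c, d]"
    using cd(1) unfolding induced_path_def by (auto simp: less_Suc_eq nth_Cons')
  have facets: "G = insert c T \<or> G = insert d T" if G: "G \<in> Fs_new" "T \<subseteq> G" for G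
  proof -
    have "G \<notin> Fs" using G(2) T(3) facet v_fresh by blast
    then obtain u where u: "u \<in> F" "G = insert v (F - {u})"
      using G(1) unfolding Fs_new_def by blast
    have F: "F = insert c (insert d T')" using cd(2) T'F by blast
    have "u \<notin> T" using G(2) u F_props(5) by blast
    then have "u \<in> F - T'" using u(1) unfolding T'_def by blast
    then consider "u = c" | "u = d" using cd(2) by blast
    then show ?thesis
    proof cases
      case 1
      then have "F - {u} = insert d T'" using F cd(1) cdF by auto
      then show ?thesis using u(2) TT(1) by (simp add: insert_commute)
    next
      case 2
      then have "F - {u} = insert c T'" using F cd(1) cdF by auto
      then show ?thesis using u(2) TT(1) by (simp add: insert_commute)
    qed
  qed
  have "link_path E_new Fs_new T [c, d]"
    using path nbrs facets unfolding link_path_def by simp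
  then show ?thesis by blast
qed

lemma stacked_inv_new: "stacked_inv (insert v V) E_new Fs_new"
proof -
  have "\<exists>xs. link_path E_new Fs_new T xs"
    if T: "T \<subseteq> insert v V" "card T = 3" "clique E_new T" for T
  proof (cases "v \<in> T")
    case True
    show ?thesis by (rule link_new_apex[OF T(2,3) True])
  next
    case False
    show ?thesis
    proof (cases "T \<subseteq> F")
      case True
      show ?thesis by (rule link_new_in_facet[OF True T(2)])
    next
      case False
      show ?thesis by (rule link_new_off_facet[OF T \<open>v \<notin> T\<close> False])
    qed
  qed
  then have "triangle_links (insert v V) E_new Fs_new" unfolding triangle_links_def by blast
  then show ?thesis unfolding stacked_inv_def
    using simple_graph_new facets_new no_induced_C4_new by (intro conjI ballI) simp_all
qed

end

lemma stacked4_inv: "stacked4 V E Fs \<Longrightarrow> stacked_inv V E Fs"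
proof (induction rule: stacked4.induct)
  case (simplex S)
  then show ?case by (rule stacked_inv_simplex)
next
  case (stack V E Fs F v)
  interpret stacking_step V E Fs F v
    by (rule stacking_step.intro[OF stack.IH stack.hyps(2,3)])
  show ?case using stacked_inv_new unfolding E_new_def[abs_def] Fs_new_def .
qed

lemma biclique_of_induced_join:
  assumes "has_induced V E (join_V V1 V2) (join_E V1 E1 V2 E2)"
  obtains A B where "A \<subseteq> V" "B \<subseteq> V" "card A = card V1" "card B = card V2"
    "\<And>a b. a \<in> A \<Longrightarrow> b \<in> B \<Longrightarrow> E a b"
proof -
  obtain f where inj: "inj_on f (join_V V1 V2)" and img: "f ` join_V V1 V2 \<subseteq> V"
    and adj: "\<forall>x\<in>join_V V1 V2. \<forall>y\<in>join_V V1 V2. join_E V1 E1 V2 E2 x y \<longleftrightarrow> E (f x) (f y)"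
    using assms unfolding has_induced_def by blast
  have sub: "Inl ` V1 \<subseteq> join_V V1 V2" "Inr ` V2 \<subseteq> join_V V1 V2" unfolding join_V_def by auto
  have card: "card (f ` Inl ` V1) = card V1" "card (f ` Inr ` V2) = card V2"
    using card_image[OF inj_on_subset[OF inj sub(1)]] card_image[OF inj_on_subset[OF inj sub(2)]]
    by (simp_all add: card_image)
  have V: "f ` Inl ` V1 \<subseteq> V" "f ` Inr ` V2 \<subseteq> V"
    using image_mono[OF sub(1), of f] image_mono[OF sub(2), of f] img by auto
  have "E (f (Inl x)) (f (Inr y))" if "x \<in> V1" "y \<in> V2" for x y
  proof -
    have "Inl x \<in> join_V V1 V2" "Inr y \<in> join_V V1 V2" using that sub by auto
    moreover have "join_E V1 E1 V2 E2 (Inl x) (Inr y)" using that by simp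
    ultimately show ?thesis using adj by blast
  qed
  then have "E a b" if "a \<in> f ` Inl ` V1" "b \<in> f ` Inr ` V2" for a b
    using that by blast
  then show thesis by (rule that[OF V card])
qed

text \<open>Stacked 4-polytopal graphs have clique number 5: in a clique on six vertices,
  three of them would form a triangle inside the link of the other three, which
  is an induced path.\<close>
lemma stacked_clique_card:
  assumes inv: "stacked_inv V E Fs" and "B \<subseteq> V" "clique E B"
  shows "card B < 6"
proof (rule ccontr)
  assume "\<not> card B < 6"
  then have "3 \<le> card B" by simp
  then obtain T where T: "T \<subseteq> B" "card T = 3" "finite T" by (rule obtain_subset_with_card_n)
  have "finite V" "triangle_links V E Fs"
    using inv unfolding stacked_inv_def simple_graph_def by blast+
  then have "finite B" using \<open>B \<subseteq> V\<close> finite_subset by blast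
  then have "card (B - T) = card B - 3" using T card_Diff_subset by metis
  then have "3 \<le> card (B - T)" using \<open>\<not> card B < 6\<close> by linarith
  then obtain R where R: "R \<subseteq> B - T" "card R = 3" by (rule obtain_subset_with_card_n)
  then obtain x y z where xyz: "R = {x, y, z}" "x \<noteq> y" "y \<noteq> z" "x \<noteq> z"
    unfolding card_3_iff by blast
  have "clique E T" using \<open>clique E B\<close> T(1) unfolding clique_def by blast
  moreover have "T \<subseteq> V" using T(1) \<open>B \<subseteq> V\<close> by blast
  ultimately obtain xs where xs: "link_path E Fs T xs"
    using \<open>triangle_links V E Fs\<close> T(2) unfolding triangle_links_def by blast
  have "R \<subseteq> common_nbrs E T"
  proof
    fix r assume "r \<in> R"
    then have r: "r \<in> B" "r \<notin> T" using R(1) by auto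
    show "r \<in> common_nbrs E T"
      unfolding common_nbrs_def
    proof (intro CollectI ballI)
      fix t assume "t \<in> T"
      then have "t \<in> B" "r \<noteq> t" using T(1) r(2) by auto
      then show "E r t" using r(1) \<open>clique E B\<close> unfolding clique_def by blast
    qed
  qed
  then have in_link: "x \<in> set xs" "y \<in> set xs" "z \<in> set xs"
    using xs xyz(1) unfolding link_path_def by auto
  have "x \<in> B" "y \<in> B" "z \<in> B" using R(1) xyz(1) by auto
  then have "E x y" "E y z" "E x z"
    using \<open>clique E B\<close> xyz(2-4) unfolding clique_def by auto
  then show False
    using induced_path_no_triangle[OF _ in_link] xs unfolding link_path_def by blast
qed

text \<open>If two vertex sets are completely joined and the second has six vertices, the
  first is a clique: a non-edge on each side would give an induced 4-cycle, and a
  non-edge on the first side only would force a 6-clique on the second.\<close>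
lemma biclique_side_is_clique:
  assumes inv: "stacked_inv V E Fs" and "B \<subseteq> V" "card B = 6"
    and join: "\<And>a b. a \<in> A \<Longrightarrow> b \<in> B \<Longrightarrow> E a b"
  shows "clique E A"
  unfolding clique_def
proof (intro ballI impI, rule ccontr)
  fix a a' assume a: "a \<in> A" "a' \<in> A" "a \<noteq> a'" "\<not> E a a'"
  have sym: "\<And>x y. E x y \<Longrightarrow> E y x" and C4: "no_induced_C4 E"
    using inv unfolding stacked_inv_def simple_graph_def by blast+
  have "clique E B"
    unfolding clique_def
  proof (intro ballI impI)
    fix b b' assume b: "b \<in> B" "b' \<in> B" "b \<noteq> b'"
    have "E a b" "E b a'" "E a' b'" "E b' a" using join sym a(1,2) b(1,2) by blast+
    then have "E a a' \<or> E b b'" by (rule no_induced_C4D[OF C4 _ _ _ _ a(3) b(3)])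
    then show "E b b'" using a(4) by simp
  qed
  then have "card B < 6" by (rule stacked_clique_card[OF inv \<open>B \<subseteq> V\<close>])
  then show False using \<open>card B = 6\<close> by simp
qed

lemma K3_join_P6_of_link:
  assumes G: "simple_graph V E" and A: "card A = 3" "clique E A"
    and path: "induced_path E xs" "set xs \<subseteq> common_nbrs E A" "6 \<le> length xs"
  shows "has_induced V E (join_V K3_V P6_V) (join_E K3_V K3_E P6_V P6_E)"
proof -
  have sym: "\<And>x y. E x y \<Longrightarrow> E y x" and irrefl: "\<And>x. \<not> E x x"
    and inV: "\<And>x y. E x y \<Longrightarrow> x \<in> V \<and> y \<in> V"
    using G unfolding simple_graph_def by blast+
  have "finite A" using A(1) card.infinite by fastforce
  then obtain as where as: "set as = A" "distinct as" using finite_distinct_list by blast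
  have len: "length as = 3" using as A(1) distinct_card by fastforce
  define g where "g = case_sum (\<lambda>i. as ! i) (\<lambda>j. xs ! j)"
  have W: "w \<in> join_V K3_V P6_V \<longleftrightarrow> (\<exists>i<3. w = Inl i) \<or> (\<exists>j<6. w = Inr j)" for w
    unfolding join_V_def K3_V_def P6_V_def by auto
  have cross: "E (xs ! j) (as ! i)" if "i < 3" "j < 6" for i j
  proof -
    have "xs ! j \<in> common_nbrs E A" using that path(2,3) nth_mem[of j xs] by auto
    moreover have "as ! i \<in> A" using that as(1) len nth_mem[of i as] by auto
    ultimately show ?thesis unfolding common_nbrs_def by blast
  qed
  have apex_edge: "E (as ! i) (as ! i') \<longleftrightarrow> i \<noteq> i'" if "i < 3" "i' < 3" for i i'
    using that A(2) as len irrefl unfolding clique_def by (auto simp: nth_eq_iff_index_eq)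
  have path_edge: "E (xs ! j) (xs ! j') \<longleftrightarrow> j' = Suc j \<or> j = Suc j'" if "j < 6" "j' < 6" for j j'
    using that path(1,3) unfolding induced_path_def by auto
  have apart: "as ! i \<noteq> xs ! j" "xs ! j \<noteq> as ! i" if "i < 3" "j < 6" for i j
    using cross[OF that] irrefl by metis+
  have "inj_on g (join_V K3_V P6_V)"
  proof (rule inj_onI)
    fix x y assume "x \<in> join_V K3_V P6_V" "y \<in> join_V K3_V P6_V" "g x = g y"
    then show "x = y"
      using W apart as(2) len path(1,3) unfolding g_def induced_path_def
      by (auto simp: nth_eq_iff_index_eq)
  qed
  moreover have "g ` join_V K3_V P6_V \<subseteq> V"
    using W cross inV unfolding g_def by fastforce
  moreover have "join_E K3_V K3_E P6_V P6_E x y \<longleftrightarrow> E (g x) (g y)"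
    if "x \<in> join_V K3_V P6_V" "y \<in> join_V K3_V P6_V" for x y
    using that W cross sym apex_edge path_edge
    unfolding g_def K3_E_def K3_V_def P6_E_def P6_V_def by auto
  ultimately show ?thesis unfolding has_induced_def by blast
qed

theorem lemma4p6:
  fixes V :: "'a set" and E :: "'a \<Rightarrow> 'a \<Rightarrow> bool"
  assumes "stacked4_graph V E"
    and "\<exists>(V3 :: nat set) E3 (V6 :: nat set) E6.
           simple_graph V3 E3 \<and> card V3 = 3 \<and> simple_graph V6 E6 \<and> card V6 = 6 \<and>
           has_induced V E (join_V V3 V6) (join_E V3 E3 V6 E6)"
  shows "has_induced V E (join_V K3_V P6_V) (join_E K3_V K3_E P6_V P6_E)"
proof -
  obtain Fs where inv: "stacked_inv V E Fs"
    using assms(1) stacked4_inv unfolding stacked4_graph_def by blast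
  obtain V3 :: "nat set" and E3 and V6 :: "nat set" and E6 where
    "card V3 = 3" "card V6 = 6" "has_induced V E (join_V V3 V6) (join_E V3 E3 V6 E6)"
    using assms(2) by blast
  then obtain A B where AB: "A \<subseteq> V" "B \<subseteq> V" "card A = 3" "card B = 6"
    and join: "\<And>a b. a \<in> A \<Longrightarrow> b \<in> B \<Longrightarrow> E a b"
    by (metis biclique_of_induced_join)
  have "clique E A" using biclique_side_is_clique[OF inv AB(2,4) join] .
  then obtain xs where xs: "link_path E Fs A xs"
    using inv AB(1,3) unfolding stacked_inv_def triangle_links_def by blast
  have "B \<subseteq> common_nbrs E A"
    using inv join unfolding stacked_inv_def simple_graph_def common_nbrs_def by blast
  then have "B \<subseteq> set xs" using xs unfolding link_path_def by simp
  then have "6 \<le> length xs"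
    using AB(4) card_mono[OF List.finite_set] card_length le_trans by metis
  then show ?thesis
    using K3_join_P6_of_link[of V E A xs] inv AB(3) \<open>clique E A\<close> xs
    unfolding stacked_inv_def link_path_def by auto
qed

end
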